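(* Let $(x_n)$ be generated by (HPPA). Let ${\rm a},{\rm b},{\rm B},{\rm E}:\mathbb{N}\to\mathbb{N}$ be monotone functions satisfying (Q1), (Q3'), (Q3), (Q4) respectively. Let $\mathcal{E},\mathcal{D}\in\mathbb{N}$ satisfy $\mathcal{E}\geq 1+\sum_{i=0}^{{\rm E}(0)}\|e_i\|$ and $\mathcal{D}\geq\|x_0-p\|$ for some $p\in S$, and set $N:=\max\{2\mathcal{D},\mathcal{D}+\mathcal{E}\}$. Then for every $k\in\mathbb{N}$ and every monotone $f:\mathbb{N}\to\mathbb{N}$ there exist $n\leq\Psi(k,f)$ and $x\in B_N$ such that $$\forall i\in[n,f(n)]\ \left(\|J_{\beta_i}(x)-x\|\leq\frac{1}{f(n)+1}\ \wedge\ \langle x_0-x,\,x_i-x\rangle\leq\frac{1}{k+1}\right),$$ where $\Psi(k,f):=\chi_1\big(24N(w_{\hat\nu,N}^{(R)}(0)+1)^2\big)$ with: $R:=4N^4(k+1)^2$; $\nu_f(m):=\delta_{\rm b}(f(m),f(m))$ where $\delta_{\rm b}(k',n'):=\max\{2,{\rm b}(n')\}(k'+1)-1$; $\hat\nu(m):=\nu_f(\chi_1(m))$; $w_{g,N}(m):=\max\{g(24N(m+1)^2),24N(m+1)^2\}$; $\xi(k'):=\max\{{\rm a}(2(2\mathcal{D}+\mathcal{E})(k'+1)-1),{\rm E}(2k'+1)+1\}$; and $\chi_1(k'):=\max\{\xi(4k'+3),{\rm B}(8(\mathcal{D}+\mathcal{E})(k'+1)-1)\}+1$.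
   Context: $X$ is a real Hilbert space, $\mathsf{A}:X\to 2^X$ a maximal monotone operator with zero set $S=\{x:0\in\mathsf{A}(x)\}$, assumed nonempty. For $\beta>0$, $J_\beta:=(Id+\beta\mathsf{A})^{-1}$ is the resolvent, a single-valued nonexpansive map with fixed point set $S$. Given $(\alpha_n)\subset\,]0,1[$, $(\beta_n)\subset(0,\infty)$, $(e_n)\subset X$, $x_0\in X$, (HPPA) is the sequence $x_{n+1}:=\alpha_n x_0+(1-\alpha_n)(J_{\beta_n}(x_n)+e_n)$. (Q1): $\forall k\,\forall n\geq{\rm a}(k)\ \alpha_n\leq\frac{1}{k+1}$. (Q3'): $\forall n\ \beta_n\leq{\rm b}(n)$. (Q3): $\forall k\,\forall n\geq{\rm B}(k)\ \beta_n\geq k$. (Q4): $\forall k\,\forall n\ \sum_{i={\rm E}(k)+1}^{{\rm E}(k)+n}\|e_i\|\leq\frac{1}{k+1}$. $B_N:=\{x\in X:\|x-p\|\leq N\}$ with $p$ the point in $S$ from the hypothesis. Monotone means nondecreasing. $g^{(R)}$ is the $R$-fold composition of $g$ ($g^{(0)}$ the identity). $[a,b]$ is the set of naturals $m$ with $a\le m\le b$. *)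

theory Defs
  imports "HOL-Analysis.Analysis"
begin

definition monotone_operator :: "('a::real_inner \<Rightarrow> 'a set) \<Rightarrow> bool" where
  "monotone_operator A \<longleftrightarrow>
     (\<forall>x y u v. u \<in> A x \<longrightarrow> v \<in> A y \<longrightarrow> 0 \<le> inner (x - y) (u - v))"

definition maximal_monotone :: "('a::real_inner \<Rightarrow> 'a set) \<Rightarrow> bool" where
  "maximal_monotone A \<longleftrightarrow> monotone_operator A \<and>
     (\<forall>B. monotone_operator B \<and> (\<forall>x. A x \<subseteq> B x) \<longrightarrow> B = A)"

definition zeros :: "('a::real_inner \<Rightarrow> 'a set) \<Rightarrow> 'a set" where
  "zeros A = {x. 0 \<in> A x}"

definition resolvent :: "('a::real_inner \<Rightarrow> 'a set) \<Rightarrow> real \<Rightarrow> 'a \<Rightarrow> 'a" where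
  "resolvent A \<beta> x = (THE y. \<exists>u \<in> A y. x = y + \<beta> *\<^sub>R u)"

definition N_bound :: "nat \<Rightarrow> nat \<Rightarrow> nat" where
  "N_bound DD EE = max (2 * DD) (DD + EE)"

definition delta_b :: "(nat \<Rightarrow> nat) \<Rightarrow> nat \<Rightarrow> nat \<Rightarrow> nat" where
  "delta_b b k' n' = max 2 (b n') * (k' + 1) - 1"

definition nu_f :: "(nat \<Rightarrow> nat) \<Rightarrow> (nat \<Rightarrow> nat) \<Rightarrow> nat \<Rightarrow> nat" where
  "nu_f b f m = delta_b b (f m) (f m)"

definition w_fun :: "(nat \<Rightarrow> nat) \<Rightarrow> nat \<Rightarrow> nat \<Rightarrow> nat" where
  "w_fun g N m = max (g (24 * N * (m + 1)^2)) (24 * N * (m + 1)^2)"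

definition xi_fun :: "(nat \<Rightarrow> nat) \<Rightarrow> (nat \<Rightarrow> nat) \<Rightarrow> nat \<Rightarrow> nat \<Rightarrow> nat \<Rightarrow> nat" where
  "xi_fun a E DD EE k' = max (a (2 * (2 * DD + EE) * (k' + 1) - 1)) (E (2 * k' + 1) + 1)"

definition chi1 :: "(nat \<Rightarrow> nat) \<Rightarrow> (nat \<Rightarrow> nat) \<Rightarrow> (nat \<Rightarrow> nat) \<Rightarrow> nat \<Rightarrow> nat \<Rightarrow> nat \<Rightarrow> nat" where
  "chi1 a B E DD EE k' = max (xi_fun a E DD EE (4 * k' + 3)) (B (8 * (DD + EE) * (k' + 1) - 1)) + 1"

definition nu_hat :: "(nat \<Rightarrow> nat) \<Rightarrow> (nat \<Rightarrow> nat) \<Rightarrow> (nat \<Rightarrow> nat) \<Rightarrow> (nat \<Rightarrow> nat)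
    \<Rightarrow> nat \<Rightarrow> nat \<Rightarrow> (nat \<Rightarrow> nat) \<Rightarrow> nat \<Rightarrow> nat" where
  "nu_hat a b B E DD EE f m = nu_f b f (chi1 a B E DD EE m)"

definition Psi :: "(nat \<Rightarrow> nat) \<Rightarrow> (nat \<Rightarrow> nat) \<Rightarrow> (nat \<Rightarrow> nat) \<Rightarrow> (nat \<Rightarrow> nat)
    \<Rightarrow> nat \<Rightarrow> nat \<Rightarrow> nat \<Rightarrow> (nat \<Rightarrow> nat) \<Rightarrow> nat" where
  "Psi a b B E DD EE k f =
     (let N = N_bound DD EE;
          R = 4 * N^4 * (k + 1)^2;
          w = w_fun (nu_hat a b B E DD EE f) N
      in chi1 a B E DD EE (24 * N * ((w ^^ R) 0 + 1)^2))"

end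

theory Submission
  imports Defs
begin

text \<open>The resolvent is everywhere defined by Minty's theorem, which follows by minimizing
  \<open>F + \<parallel>\<cdot>\<parallel>\<^sup>2/2\<close> for the Fitzpatrick function \<open>F\<close> of a monotone graph. Since
  \<open>\<alpha>\<^sub>n \<rightarrow> 0\<close>, \<open>\<Sum> \<parallel>e\<^sub>n\<parallel> < \<infinity>\<close> and \<open>\<beta>\<^sub>n \<rightarrow> \<infinity>\<close>, the iterates stay in \<open>B\<^sub>N\<close> and
  from index \<open>\<chi>\<^sub>1(m)\<close> on they are \<open>1/(m+1)\<close>-fixed points of \<open>J\<^sub>1\<close>. A finitary version of the
  projection of \<open>x0\<close> onto \<open>Fix J\<^sub>1 = S\<close> then yields, after boundedly many descent steps on
  \<open>\<parallel>x0 - y\<parallel>\<^sup>2\<close>, a point \<open>y\<close> with \<open>\<langle>x0 - y, w - y\<rangle> \<le> 1/(k+1)\<close> for all sufficiently good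
  approximate fixed points \<open>w\<close>, in particular for the \<open>x\<^sub>i\<close>. Finally
  \<open>\<parallel>J\<^sub>\<beta> y - y\<parallel> \<le> max 2 \<beta> \<parallel>J\<^sub>1 y - y\<parallel>\<close> and \<open>\<beta>\<^sub>i \<le> b(i)\<close> transfer the approximate fixed point
  property of \<open>y\<close> from \<open>J\<^sub>1\<close> to all \<open>J\<^sub>\<beta>\<^sub>i\<close>.\<close>

section \<open>Minty's theorem and the resolvent\<close>

definition affine_bdd :: "('i \<Rightarrow> 'h::real_inner) \<Rightarrow> ('i \<Rightarrow> real) \<Rightarrow> 'i set \<Rightarrow> 'h \<Rightarrow> bool" where
  "affine_bdd c d I a \<longleftrightarrow> bdd_above ((\<lambda>i. inner a (c i) + d i) ` I)"

definition affine_sup :: "('i \<Rightarrow> 'h::real_inner) \<Rightarrow> ('i \<Rightarrow> real) \<Rightarrow> 'i set \<Rightarrow> 'h \<Rightarrow> real" where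
  "affine_sup c d I a = (SUP i\<in>I. inner a (c i) + d i)"

lemma affine_sup_upper:
  "affine_bdd c d I a \<Longrightarrow> i \<in> I \<Longrightarrow> inner a (c i) + d i \<le> affine_sup c d I a"
  unfolding affine_bdd_def affine_sup_def by (rule cSUP_upper)

lemma affine_sup_least:
  assumes "I \<noteq> {}" and "\<And>i. i \<in> I \<Longrightarrow> inner a (c i) + d i \<le> M"
  shows "affine_bdd c d I a \<and> affine_sup c d I a \<le> M"
  using assms unfolding affine_bdd_def affine_sup_def by (auto intro!: bdd_aboveI2 cSUP_least)

lemma affine_sup_convex:
  assumes I: "I \<noteq> {}" and a: "affine_bdd c d I a" and b: "affine_bdd c d I b"
    and t: "0 \<le> t" "t \<le> 1"
  shows "affine_bdd c d I ((1-t) *\<^sub>R a + t *\<^sub>R b) \<and>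
    affine_sup c d I ((1-t) *\<^sub>R a + t *\<^sub>R b) \<le> (1-t) * affine_sup c d I a + t * affine_sup c d I b"
proof (rule affine_sup_least[OF I])
  fix i assume i: "i \<in> I"
  have "inner ((1-t) *\<^sub>R a + t *\<^sub>R b) (c i) + d i
      = (1-t) * (inner a (c i) + d i) + t * (inner b (c i) + d i)"
    by (simp add: inner_add_left algebra_simps)
  also have "\<dots> \<le> (1-t) * affine_sup c d I a + t * affine_sup c d I b"
    using affine_sup_upper[OF a i] affine_sup_upper[OF b i] t by (intro add_mono mult_left_mono) auto
  finally show "inner ((1-t) *\<^sub>R a + t *\<^sub>R b) (c i) + d i \<le> \<dots>" .
qed

lemma Cauchy_if_dist_sq_le:
  fixes s :: "nat \<Rightarrow> 'a::metric_space"
  assumes "\<And>i j. (dist (s i) (s j))^2 \<le> 4 / (real i + 1) + 4 / (real j + 1)"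
  shows "Cauchy s"
proof (rule metric_CauchyI)
  fix \<epsilon> :: real assume \<epsilon>: "\<epsilon> > 0"
  obtain M :: nat where M: "8 / \<epsilon>^2 < real M" using reals_Archimedean2 by blast
  have "\<forall>i\<ge>M. \<forall>j\<ge>M. dist (s i) (s j) < \<epsilon>"
  proof (intro allI impI)
    fix i j assume ij: "M \<le> i" "M \<le> j"
    have "4 / (real i + 1) \<le> 4 / (real M + 1)" "4 / (real j + 1) \<le> 4 / (real M + 1)"
      using ij by (auto intro!: divide_left_mono)
    then have "(dist (s i) (s j))^2 \<le> 8 / (real M + 1)"
      using assms[of i j] by simp
    also have "\<dots> < \<epsilon>^2"
    proof -
      have "8 < \<epsilon>^2 * real M" using M \<epsilon> by (simp add: field_simps)
      also have "\<dots> \<le> \<epsilon>^2 * (real M + 1)" by (intro mult_left_mono) auto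
      finally show ?thesis using \<epsilon> by (simp add: field_simps)
    qed
    finally show "dist (s i) (s j) < \<epsilon>" using \<epsilon> by (simp add: power_less_imp_less_base)
  qed
  then show "\<exists>M. \<forall>i\<ge>M. \<forall>j\<ge>M. dist (s i) (s j) < \<epsilon>" by blast
qed

lemma norm_midpoint_sq:
  fixes a b :: "'a::real_inner"
  shows "(norm ((1/2) *\<^sub>R a + (1/2) *\<^sub>R b))^2 = (norm a)^2/2 + (norm b)^2/2 - (norm (a - b))^2/4"
  by (simp add: power2_norm_eq_inner inner_add_left inner_add_right inner_diff_left inner_diff_right
      inner_commute field_simps)

lemma affine_sup_half_norm_sq_limit_le:
  fixes c :: "'i \<Rightarrow> 'h::real_inner"
  assumes I: "I \<noteq> {}" and s: "\<And>n. affine_bdd c d I (s n)" and lim: "s \<longlonglongrightarrow> l"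
    and le: "\<And>n. affine_sup c d I (s n) + (norm (s n))^2/2 \<le> m + 1/(real n + 1)"
  shows "affine_bdd c d I l \<and> affine_sup c d I l + (norm l)^2/2 \<le> m"
proof -
  have "inner l (c i) + d i + (norm l)^2/2 \<le> m" if "i \<in> I" for i
  proof (rule LIMSEQ_le)
    show "(\<lambda>n. inner (s n) (c i) + d i + (norm (s n))^2/2) \<longlonglongrightarrow> inner l (c i) + d i + (norm l)^2/2"
      by (intro tendsto_intros lim) simp
    show "(\<lambda>n. m + 1/(real n + 1)) \<longlonglongrightarrow> m"
      using LIMSEQ_inverse_real_of_nat_add[of m] by (simp add: inverse_eq_divide add.commute)
    show "\<exists>N. \<forall>n\<ge>N. inner (s n) (c i) + d i + (norm (s n))^2/2 \<le> m + 1/(real n + 1)"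
      using affine_sup_upper[OF s that] le by (meson add_right_mono order_trans)
  qed
  then have "affine_bdd c d I l \<and> affine_sup c d I l \<le> m - (norm l)^2/2"
    by (intro affine_sup_least[OF I]) (simp add: algebra_simps)
  then show ?thesis by simp
qed

lemma affine_sup_half_norm_sq_has_minimizer:
  fixes c :: "'i \<Rightarrow> 'h::{real_inner,complete_space}" and d :: "'i \<Rightarrow> real" and I :: "'i set"
  assumes I: "I \<noteq> {}" and a1: "affine_bdd c d I a1"
  shows "\<exists>a0. affine_bdd c d I a0 \<and> (\<forall>a. affine_bdd c d I a \<longrightarrow>
    affine_sup c d I a0 + (norm a0)^2/2 \<le> affine_sup c d I a + (norm a)^2/2)"
proof -
  define \<Phi> where "\<Phi> a = affine_sup c d I a + (norm a)^2/2" for a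
  let ?D = "Collect (affine_bdd c d I)"
  obtain i0 where i0: "i0 \<in> I" using I by auto
  have "d i0 - (norm (c i0))^2/2 \<le> \<Phi> a" if "affine_bdd c d I a" for a
  proof -
    have "- (norm a * norm (c i0)) \<le> inner a (c i0)"
      using Cauchy_Schwarz_ineq2[of a "c i0"] by (simp add: abs_le_iff)
    moreover have "0 \<le> (norm a - norm (c i0))^2" by simp
    ultimately show ?thesis
      using affine_sup_upper[of c d I a i0] that i0 unfolding \<Phi>_def power2_diff by simp
  qed
  then have bdd: "bdd_below (\<Phi> ` ?D)" by (auto intro!: bdd_belowI2)
  define m where "m = Inf (\<Phi> ` ?D)"
  have m_le: "m \<le> \<Phi> a" if "affine_bdd c d I a" for a
    unfolding m_def using bdd that by (auto intro: cInf_lower)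
  have "\<exists>a. affine_bdd c d I a \<and> \<Phi> a < m + 1/(real n+1)" for n
    using cInf_lessD[of "\<Phi> ` ?D" "m + 1/(real n+1)"] a1 unfolding m_def by auto
  then obtain s where s: "\<And>n. affine_bdd c d I (s n)" "\<And>n. \<Phi> (s n) < m + 1/(real n+1)" by metis
  \<comment> \<open>Strong convexity of \<open>\<Phi>\<close> makes every minimizing sequence Cauchy.\<close>
  have dist_sq: "(norm (a - b))^2 \<le> 4 * (\<Phi> a + \<Phi> b) - 8 * m"
    if "affine_bdd c d I a" "affine_bdd c d I b" for a b
  proof -
    let ?M = "(1/2) *\<^sub>R a + (1/2) *\<^sub>R b"
    have M: "affine_bdd c d I ?M" and "affine_sup c d I ?M \<le> affine_sup c d I a/2 + affine_sup c d I b/2"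
      using affine_sup_convex[OF I that, of "1/2"] by auto
    moreover have "m \<le> \<Phi> ?M" using m_le M by simp
    ultimately show ?thesis using norm_midpoint_sq[of a b] unfolding \<Phi>_def by argo
  qed
  have "Cauchy s"
  proof (rule Cauchy_if_dist_sq_le)
    fix i j
    show "(dist (s i) (s j))^2 \<le> 4 / (real i + 1) + 4 / (real j + 1)"
      using dist_sq[OF s(1) s(1), of i j] s(2)[of i] s(2)[of j] by (simp add: dist_norm)
  qed
  then obtain a0 where "s \<longlonglongrightarrow> a0" using Cauchy_convergent_iff convergent_def by blast
  moreover have "\<Phi> (s n) \<le> m + 1/(real n + 1)" for n using s(2)[of n] by simp
  ultimately have "affine_bdd c d I a0 \<and> \<Phi> a0 \<le> m"
    using affine_sup_half_norm_sq_limit_le[where s=s and l=a0 and m=m, OF I s(1)] unfolding \<Phi>_def by blast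
  then show ?thesis using m_le unfolding \<Phi>_def by (blast intro: order_trans)
qed

lemma nonneg_if_nonneg_add_small_multiple:
  fixes C K :: real
  assumes "\<And>t. 0 < t \<Longrightarrow> t \<le> 1 \<Longrightarrow> 0 \<le> C + t * K"
  shows "0 \<le> C"
proof (rule ccontr)
  assume "\<not> 0 \<le> C"
  define t where "t = min 1 (- C / (\<bar>K\<bar> + 1))"
  have t: "0 < t" "t \<le> 1" unfolding t_def using \<open>\<not> 0 \<le> C\<close> by (auto simp: divide_neg_pos)
  have "t * K \<le> t * \<bar>K\<bar>" using t by (simp add: mult_left_mono)
  also have "\<dots> \<le> (- C / (\<bar>K\<bar> + 1)) * \<bar>K\<bar>" unfolding t_def by (intro mult_right_mono) auto
  also have "\<dots> < - C" using \<open>\<not> 0 \<le> C\<close> by (simp add: field_simps)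
  finally show False using assms[OF t] by simp
qed

lemma affine_sup_half_norm_sq_minimizer_variational:
  fixes c :: "'i \<Rightarrow> 'h::real_inner" and d :: "'i \<Rightarrow> real" and I :: "'i set"
  assumes I: "I \<noteq> {}" and a0: "affine_bdd c d I a0" and b: "affine_bdd c d I b"
    and min: "\<And>a. affine_bdd c d I a \<Longrightarrow>
      affine_sup c d I a0 + (norm a0)^2/2 \<le> affine_sup c d I a + (norm a)^2/2"
  shows "0 \<le> affine_sup c d I b - affine_sup c d I a0 + inner a0 (b - a0)"
proof (rule nonneg_if_nonneg_add_small_multiple)
  fix t :: real assume t: "0 < t" "t \<le> 1"
  let ?F = "affine_sup c d I" and ?K = "(norm (b - a0))^2"
  let ?a = "(1-t) *\<^sub>R a0 + t *\<^sub>R b"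
  have conv: "affine_bdd c d I ?a" "?F ?a \<le> (1-t) * ?F a0 + t * ?F b"
    using affine_sup_convex[OF I a0 b] t by auto
  have "(norm ?a)^2 = (norm a0)^2 + 2*t*inner a0 (b - a0) + t^2 * ?K"
    unfolding power2_norm_eq_inner
    by (simp add: inner_add_left inner_add_right inner_diff_left inner_diff_right inner_commute
        algebra_simps power2_eq_square)
  then have "0 \<le> t * (?F b - ?F a0 + inner a0 (b - a0) + t * (?K/2))"
    using min[OF conv(1)] conv(2) by (simp add: algebra_simps power2_eq_square)
  then show "0 \<le> ?F b - ?F a0 + inner a0 (b - a0) + t * (?K/2)"
    using t by (simp add: zero_le_mult_iff)
qed

text \<open>The witness is \<open>c = (x - u)/2\<close> for the minimizer \<open>(x, u)\<close> of \<open>F + \<parallel>\<cdot>\<parallel>\<^sup>2/2\<close>, where \<open>F\<close> is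
  the Fitzpatrick function of \<open>G\<close>; monotonicity of \<open>G\<close> says \<open>F (y, v) \<le> \<langle>y, v\<rangle>\<close> on \<open>G\<close>.\<close>

lemma monotone_set_ex_antidiagonal_related:
  fixes G :: "('a::{real_inner,complete_space} \<times> 'a) set"
  assumes mono: "\<And>y v y' v'. (y,v) \<in> G \<Longrightarrow> (y',v') \<in> G \<Longrightarrow> 0 \<le> inner (y - y') (v - v')"
    and G: "G \<noteq> {}"
  shows "\<exists>c. \<forall>y v. (y,v) \<in> G \<longrightarrow> 0 \<le> inner (y - c) (v + c)"
proof -
  define c :: "'a \<times> 'a \<Rightarrow> 'a \<times> 'a" where "c = (\<lambda>(y,v). (v,y))"
  define d :: "'a \<times> 'a \<Rightarrow> real" where "d = (\<lambda>(y,v). - inner y v)"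
  let ?F = "affine_sup c d G"
  have F_le: "affine_bdd c d G b \<and> ?F b \<le> inner y v" if b: "b = (y,v)" "b \<in> G" for b y v
  proof (rule affine_sup_least[OF G])
    fix i assume "i \<in> G"
    moreover obtain y' v' where i: "i = (y',v')" by (cases i)
    ultimately have "0 \<le> inner (y - y') (v - v')" using mono b by blast
    then show "inner b (c i) + d i \<le> inner y v" unfolding b i c_def d_def
      by (simp add: inner_diff_left inner_diff_right inner_commute)
  qed
  obtain b0 where "b0 \<in> G" using G by blast
  then have "affine_bdd c d G b0" using F_le[of b0 "fst b0" "snd b0"] by simp
  then obtain a0 where a0: "affine_bdd c d G a0"
    and min: "\<And>a. affine_bdd c d G a \<Longrightarrow> ?F a0 + (norm a0)^2/2 \<le> ?F a + (norm a)^2/2"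
    using affine_sup_half_norm_sq_has_minimizer[OF G] by blast
  obtain x u where xu: "a0 = (x,u)" by (cases a0)
  show ?thesis
  proof (intro exI allI impI)
    fix y v assume yv: "(y,v) \<in> G"
    have "0 \<le> ?F (y,v) - ?F a0 + inner a0 ((y,v) - a0)"
      using affine_sup_half_norm_sq_minimizer_variational[OF G a0 _ min] F_le[OF refl yv] by blast
    moreover have "?F (y,v) \<le> inner y v" and "inner a0 (c (y,v)) + d (y,v) \<le> ?F a0"
      using F_le[OF refl yv] affine_sup_upper[OF a0 yv] by auto
    moreover have "2 * inner (y - (1/2) *\<^sub>R (x - u)) (v + (1/2) *\<^sub>R (x - u)) =
        (inner y v - ?F a0 + inner a0 ((y,v) - a0)) + (?F a0 - (inner a0 (c (y,v)) + d (y,v)))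
        + (norm (x + u))^2/2"
      unfolding xu c_def d_def
      by (simp add: power2_norm_eq_inner inner_add_left inner_add_right inner_diff_left
          inner_diff_right inner_commute algebra_simps)
    moreover have "0 \<le> (norm (x + u))^2" by simp
    ultimately show "0 \<le> inner (y - (1/2) *\<^sub>R (x - u)) (v + (1/2) *\<^sub>R (x - u))"
      by linarith
  qed
qed

lemma maximal_monotone_memI:
  assumes A: "maximal_monotone A" and rel: "\<And>y v. v \<in> A y \<Longrightarrow> 0 \<le> inner (x - y) (u - v)"
  shows "u \<in> A x"
proof -
  define A' where "A' = A(x := insert u (A x))"
  have monA: "monotone_operator A" using A unfolding maximal_monotone_def by simp
  have rel': "0 \<le> inner (x1 - y1) (u1 - v1)" if "u1 \<in> A x1" "y1 = x" "v1 = u" for x1 y1 u1 v1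
  proof -
    have "0 \<le> inner (x - x1) (u - u1)" using rel that(1) .
    also have "inner (x - x1) (u - u1) = inner (x1 - y1) (u1 - v1)"
      using that(2,3) by (metis inner_minus_left inner_minus_right minus_diff_eq)
    finally show ?thesis .
  qed
  have "monotone_operator A'"
    unfolding monotone_operator_def
  proof (intro allI impI)
    fix x1 y1 u1 v1 assume "u1 \<in> A' x1" "v1 \<in> A' y1"
    then consider "x1 = x" "u1 = u" "y1 = x" "v1 = u" | "x1 = x" "u1 = u" "v1 \<in> A y1"
      | "u1 \<in> A x1" "y1 = x" "v1 = u" | "u1 \<in> A x1" "v1 \<in> A y1"
      unfolding A'_def by (auto split: if_splits)
    then show "0 \<le> inner (x1 - y1) (u1 - v1)"
      by cases (use rel rel' monA in \<open>auto simp: monotone_operator_def\<close>)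
  qed
  moreover have "\<forall>z. A z \<subseteq> A' z" unfolding A'_def by auto
  ultimately have "A' = A" using A unfolding maximal_monotone_def by blast
  then show ?thesis unfolding A'_def by (metis fun_upd_same insertI1)
qed

context
  fixes A :: "'a::{real_inner,complete_space} \<Rightarrow> 'a set"
  assumes A: "maximal_monotone A"
begin

lemma maximal_monotone_inner_nonneg: "u \<in> A x \<Longrightarrow> v \<in> A y \<Longrightarrow> 0 \<le> inner (x - y) (u - v)"
  using A unfolding maximal_monotone_def monotone_operator_def by blast

lemma resolvent_eqI:
  assumes \<beta>: "\<beta> > 0" and u: "u \<in> A y"
  shows "resolvent A \<beta> (y + \<beta> *\<^sub>R u) = y"
  unfolding resolvent_def
proof (rule the_equality)
  show "\<exists>u'\<in>A y. y + \<beta> *\<^sub>R u = y + \<beta> *\<^sub>R u'" using u by blast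
next
  fix y' assume "\<exists>u'\<in>A y'. y + \<beta> *\<^sub>R u = y' + \<beta> *\<^sub>R u'"
  then obtain u' where u': "u' \<in> A y'" and eq: "y + \<beta> *\<^sub>R u = y' + \<beta> *\<^sub>R u'" by blast
  have d: "y' - y = \<beta> *\<^sub>R (u - u')" using eq by (simp add: algebra_simps)
  have "0 \<le> inner (y' - y) (u' - u)" using maximal_monotone_inner_nonneg[OF u' u] .
  also have "inner (y' - y) (u' - u) = - \<beta> * (norm (u - u'))^2"
    unfolding d power2_norm_eq_inner
    by (simp add: inner_diff_right inner_diff_left inner_commute algebra_simps)
  finally have "u = u'" using \<beta> by (simp add: mult_le_0_iff)
  then show "y' = y" using d by simp
qed

text \<open>For the graph of \<open>\<beta>A - z\<close>, the point \<open>c\<close> of \<open>monotone_set_ex_antidiagonal_related\<close>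
  satisfies \<open>z \<in> c + \<beta>A(c)\<close> by maximality of \<open>A\<close>; so \<open>Id + \<beta>A\<close> is onto.\<close>

lemma resolvent_mem:
  assumes \<beta>: "\<beta> > 0"
  shows "(1/\<beta>) *\<^sub>R (z - resolvent A \<beta> z) \<in> A (resolvent A \<beta> z)"
proof -
  define G where "G = {(y, \<beta> *\<^sub>R v - z) | y v. v \<in> A y}"
  have "\<exists>c. \<forall>y v. (y,v) \<in> G \<longrightarrow> 0 \<le> inner (y - c) (v + c)"
  proof (rule monotone_set_ex_antidiagonal_related)
    fix y v y' v' assume "(y,v) \<in> G" "(y',v') \<in> G"
    then obtain w w' where w: "w \<in> A y" "v = \<beta> *\<^sub>R w - z" and w': "w' \<in> A y'" "v' = \<beta> *\<^sub>R w' - z"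
      unfolding G_def by blast
    have "inner (y - y') (v - v') = \<beta> * inner (y - y') (w - w')"
      unfolding w w' by (simp add: algebra_simps inner_diff_right)
    then show "0 \<le> inner (y - y') (v - v')"
      using maximal_monotone_inner_nonneg[OF w(1) w'(1)] \<beta> by simp
  next
    have "0 \<in> A 0" if "\<forall>y. A y = {}" using maximal_monotone_memI[OF A] that by blast
    then obtain y0 v0 where "v0 \<in> A y0" by blast
    then show "G \<noteq> {}" unfolding G_def by blast
  qed
  then obtain c where c: "\<And>y v. (y,v) \<in> G \<Longrightarrow> 0 \<le> inner (y - c) (v + c)" by blast
  have c_mem: "(1/\<beta>) *\<^sub>R (z - c) \<in> A c"
  proof (rule maximal_monotone_memI[OF A])
    fix y v assume v: "v \<in> A y"
    then have "0 \<le> inner (y - c) (\<beta> *\<^sub>R v - z + c)" using c unfolding G_def by blast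
    moreover have "inner (c - y) ((1/\<beta>) *\<^sub>R (z - c) - v) = (1/\<beta>) * inner (y - c) (\<beta> *\<^sub>R v - z + c)"
      using \<beta> by (simp add: inner_diff_right inner_diff_left inner_add_right inner_commute algebra_simps)
    ultimately show "0 \<le> inner (c - y) ((1/\<beta>) *\<^sub>R (z - c) - v)" using \<beta> by simp
  qed
  have "resolvent A \<beta> (c + \<beta> *\<^sub>R ((1/\<beta>) *\<^sub>R (z - c))) = c" by (rule resolvent_eqI[OF \<beta> c_mem])
  then have "resolvent A \<beta> z = c" using \<beta> by simp
  then show ?thesis using c_mem by simp
qed

lemma resolvent_firmly_nonexpansive:
  assumes \<beta>: "\<beta> > 0"
  shows "(norm (resolvent A \<beta> x - resolvent A \<beta> y))^2
    \<le> inner (x - y) (resolvent A \<beta> x - resolvent A \<beta> y)"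
proof -
  let ?J = "resolvent A \<beta>"
  have "0 \<le> inner (?J x - ?J y) ((1/\<beta>) *\<^sub>R (x - ?J x) - (1/\<beta>) *\<^sub>R (y - ?J y))"
    using maximal_monotone_inner_nonneg[OF resolvent_mem[OF \<beta>] resolvent_mem[OF \<beta>]] .
  also have "\<dots> = (1/\<beta>) * (inner (x - y) (?J x - ?J y) - (norm (?J x - ?J y))^2)"
    unfolding power2_norm_eq_inner by (simp add: inner_diff_right inner_diff_left inner_commute algebra_simps)
  finally show ?thesis using \<beta> by (simp add: zero_le_divide_iff)
qed

lemma resolvent_nonexpansive:
  assumes \<beta>: "\<beta> > 0"
  shows "norm (resolvent A \<beta> x - resolvent A \<beta> y) \<le> norm (x - y)"
proof -
  let ?n = "norm (resolvent A \<beta> x - resolvent A \<beta> y)"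
  have "?n^2 \<le> norm (x - y) * ?n"
    using resolvent_firmly_nonexpansive[OF \<beta>, of x y]
      Cauchy_Schwarz_ineq2[of "x - y" "resolvent A \<beta> x - resolvent A \<beta> y"] by linarith
  then show ?thesis by (cases "?n = 0") (auto simp: power2_eq_square)
qed

lemma resolvent_zero: "\<beta> > 0 \<Longrightarrow> p \<in> zeros A \<Longrightarrow> resolvent A \<beta> p = p"
  using resolvent_eqI[of \<beta> 0 p] unfolding zeros_def by simp

lemma resolvent_identity:
  assumes \<beta>: "\<beta> > 0" and \<mu>: "\<mu> > 0"
  shows "resolvent A \<mu> ((\<mu>/\<beta>) *\<^sub>R x + (1 - \<mu>/\<beta>) *\<^sub>R resolvent A \<beta> x) = resolvent A \<beta> x"
proof -
  let ?y = "resolvent A \<beta> x"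
  have "(\<mu>/\<beta>) *\<^sub>R x + (1 - \<mu>/\<beta>) *\<^sub>R ?y = ?y + \<mu> *\<^sub>R ((1/\<beta>) *\<^sub>R (x - ?y))"
    by (simp add: algebra_simps)
  then show ?thesis using resolvent_eqI[OF \<mu> resolvent_mem[OF \<beta>]] by simp
qed

lemma resolvent_displacement_le_mem:
  assumes \<beta>: "\<beta> > 0" and v: "v \<in> A u"
  shows "norm (resolvent A \<beta> u - u) \<le> \<beta> * norm v"
  using resolvent_nonexpansive[OF \<beta>, of u "u + \<beta> *\<^sub>R v"] resolvent_eqI[OF \<beta> v] \<beta> by simp

lemma resolvent_displacement_le_max:
  assumes \<beta>: "\<beta> > 0"
  shows "norm (resolvent A \<beta> w - w) \<le> max 2 \<beta> * norm (resolvent A 1 w - w)"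
proof (cases "\<beta> \<ge> 1")
  case True
  let ?y = "resolvent A \<beta> w" and ?y1 = "resolvent A 1 w"
  have "norm (?y - ?y1) \<le> norm (((1/\<beta>) *\<^sub>R w + (1 - 1/\<beta>) *\<^sub>R ?y) - w)"
    using resolvent_nonexpansive[of 1] resolvent_identity[OF \<beta>, of 1] by (metis zero_less_one)
  also have "((1/\<beta>) *\<^sub>R w + (1 - 1/\<beta>) *\<^sub>R ?y) - w = (1 - 1/\<beta>) *\<^sub>R (?y - w)"
    by (simp add: algebra_simps)
  also have "norm \<dots> = (1 - 1/\<beta>) * norm (?y - w)" using True by simp
  finally have "norm (?y - w) \<le> (1 - 1/\<beta>) * norm (?y - w) + norm (?y1 - w)"
    using norm_triangle_ineq[of "?y - ?y1" "?y1 - w"] by simp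
  then have "norm (?y - w) \<le> \<beta> * norm (?y1 - w)" using \<beta> by (simp add: field_simps)
  also have "\<dots> \<le> max 2 \<beta> * norm (?y1 - w)" by (intro mult_right_mono) auto
  finally show ?thesis .
next
  case False
  let ?y = "resolvent A \<beta> w" and ?y1 = "resolvent A 1 w"
  have "norm (?y - ?y1) \<le> norm (w - ((\<beta>/1) *\<^sub>R w + (1 - \<beta>/1) *\<^sub>R ?y1))"
    using resolvent_nonexpansive[OF \<beta>] resolvent_identity[OF _ \<beta>, of 1] by (metis zero_less_one)
  also have "w - ((\<beta>/1) *\<^sub>R w + (1 - \<beta>/1) *\<^sub>R ?y1) = (1 - \<beta>) *\<^sub>R (w - ?y1)"
    by (simp add: algebra_simps)
  also have "norm \<dots> = (1 - \<beta>) * norm (?y1 - w)" using False by (simp add: norm_minus_commute)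
  finally have "norm (?y - w) \<le> (1 - \<beta>) * norm (?y1 - w) + norm (?y1 - w)"
    using norm_triangle_ineq[of "?y - ?y1" "?y1 - w"] by simp
  also have "\<dots> = (2 - \<beta>) * norm (?y1 - w)" by (simp add: algebra_simps)
  also have "\<dots> \<le> max 2 \<beta> * norm (?y1 - w)" using \<beta> by (intro mult_right_mono) auto
  finally show ?thesis by simp
qed

end

section \<open>Approximate projections onto fixed points of nonexpansive maps\<close>

lemma norm_diff_convex_comb_sq:
  fixes q y w :: "'a::real_inner"
  shows "(norm (q - ((1-t) *\<^sub>R y + t *\<^sub>R w)))^2
    = (1-t) * (norm (q - y))^2 + t * (norm (q - w))^2 - t*(1-t) * (norm (y - w))^2"
  unfolding power2_norm_eq_inner
  by (simp add: inner_diff_left inner_diff_right inner_add_left inner_add_right inner_commute algebra_simps)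

lemma nonexpansive_displacement_convex_comb:
  fixes T :: "'a::real_inner \<Rightarrow> 'a"
  assumes T: "\<And>x y. norm (T x - T y) \<le> norm (x - y)"
    and t: "0 \<le> t" "t \<le> 1"
    and y: "norm (T y - y) \<le> \<delta>" and w: "norm (T w - w) \<le> \<delta>"
  shows "(norm (T ((1-t) *\<^sub>R y + t *\<^sub>R w) - ((1-t) *\<^sub>R y + t *\<^sub>R w)))^2 \<le> norm (y - w) * \<delta> + \<delta>^2"
proof -
  define z where "z = (1-t) *\<^sub>R y + t *\<^sub>R w"
  define d where "d = norm (y - w)"
  have \<delta>: "0 \<le> \<delta>" using y norm_ge_zero order_trans by blast
  have "norm (T z - y) \<le> norm (T z - T y) + norm (T y - y)"
    using norm_triangle_ineq[of "T z - T y" "T y - y"] by simp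
  also have "\<dots> \<le> norm (z - y) + \<delta>" using T y by (intro add_mono) auto
  also have "z - y = t *\<^sub>R (w - y)" unfolding z_def by (simp add: algebra_simps)
  finally have a: "norm (T z - y) \<le> t*d + \<delta>" using t unfolding d_def by (simp add: norm_minus_commute)
  have "norm (T z - w) \<le> norm (T z - T w) + norm (T w - w)"
    using norm_triangle_ineq[of "T z - T w" "T w - w"] by simp
  also have "\<dots> \<le> norm (z - w) + \<delta>" using T w by (intro add_mono) auto
  also have "z - w = (1-t) *\<^sub>R (y - w)" unfolding z_def by (simp add: algebra_simps)
  finally have b: "norm (T z - w) \<le> (1-t)*d + \<delta>" using t unfolding d_def by simp
  have "(norm (T z - z))^2 = (1-t) * (norm (T z - y))^2 + t * (norm (T z - w))^2 - t*(1-t) * d^2"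
    unfolding z_def d_def by (rule norm_diff_convex_comb_sq)
  also have "\<dots> \<le> (1-t) * (t*d + \<delta>)^2 + t * ((1-t)*d + \<delta>)^2 - t*(1-t) * d^2"
    using t a b by (intro diff_right_mono add_mono mult_left_mono power_mono) auto
  also have "\<dots> = 4*t*(1-t)*d*\<delta> + \<delta>^2"
    by (simp add: algebra_simps power2_eq_square)
  also have "4*t*(1-t)*d*\<delta> \<le> d*\<delta>"
  proof -
    have "4*t*(1-t) \<le> 1" using zero_le_power2[of "2*t - 1"] by (simp add: algebra_simps power2_eq_square)
    then have "(4*t*(1-t)) * (d*\<delta>) \<le> 1 * (d*\<delta>)" using \<delta> unfolding d_def by (intro mult_right_mono) auto
    then show ?thesis by (simp add: mult.assoc)
  qed
  finally show ?thesis unfolding z_def d_def by simp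
qed

lemma nonexpansive_displacement_le:
  fixes T :: "'a::real_normed_vector \<Rightarrow> 'a"
  assumes T: "\<And>x y. norm (T x - T y) \<le> norm (x - y)"
  shows "norm (T x - x) \<le> 2 * norm (x - u) + norm (T u - u)"
proof -
  have "norm (T x - x) \<le> norm (T x - T u) + norm (T u - u) + norm (u - x)"
    using norm_triangle_ineq[of "T x - T u" "T u - u"] norm_triangle_ineq[of "T x - u" "u - x"] by simp
  then show ?thesis using T[of x u] by (simp add: norm_minus_commute)
qed

lemma funpow_inflationary_mono:
  fixes W :: "nat \<Rightarrow> nat"
  assumes "\<And>m. m \<le> W m"
  shows "r \<le> s \<Longrightarrow> (W ^^ r) x \<le> (W ^^ s) x"
proof (induction s rule: dec_induct)
  case (step s)
  then show ?case using assms[of "(W ^^ s) x"] by simp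
qed simp

definition approx_fixed_points :: "('a::real_normed_vector \<Rightarrow> 'a) \<Rightarrow> 'a \<Rightarrow> nat \<Rightarrow> real \<Rightarrow> 'a set" where
  "approx_fixed_points T p N \<delta> = {w. norm (w - p) \<le> real N \<and> norm (T w - w) \<le> \<delta>}"

lemma approx_fixed_points_mono:
  "\<delta> \<le> \<delta>' \<Longrightarrow> approx_fixed_points T p N \<delta> \<subseteq> approx_fixed_points T p N \<delta>'"
  unfolding approx_fixed_points_def by auto

lemma w_fun_ge:
  shows "24*N*(m+1)^2 \<le> w_fun g N m" and "g (24*N*(m+1)^2) \<le> w_fun g N m"
    and "1 \<le> N \<Longrightarrow> m \<le> w_fun g N m"
proof -
  show "24*N*(m+1)^2 \<le> w_fun g N m" "g (24*N*(m+1)^2) \<le> w_fun g N m"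
    unfolding w_fun_def by simp_all
  assume "1 \<le> N"
  have "m \<le> (m+1)^2" by (simp add: power2_eq_square)
  also have "\<dots> \<le> 24*N*(m+1)^2" using \<open>1 \<le> N\<close> by simp
  also have "\<dots> \<le> w_fun g N m" unfolding w_fun_def by simp
  finally show "m \<le> w_fun g N m" .
qed

lemma dist_le_of_approx_fixed_points:
  "y \<in> approx_fixed_points T p N \<delta> \<Longrightarrow> w \<in> approx_fixed_points T p N \<delta>' \<Longrightarrow> norm (y - w) \<le> 2 * real N"
  using norm_triangle_ineq[of "y - p" "p - w"] unfolding approx_fixed_points_def
  by (simp add: norm_minus_commute)

lemma approx_fixed_points_convex_comb:
  fixes T :: "'a::real_inner \<Rightarrow> 'a"
  assumes T: "\<And>x y. norm (T x - T y) \<le> norm (x - y)" and N: "1 \<le> N" and t: "0 \<le> t" "t \<le> 1"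
    and y: "y \<in> approx_fixed_points T p N (1 / real (24*N*(m+1)^2))"
    and w: "w \<in> approx_fixed_points T p N (1 / real (24*N*(m+1)^2))"
  shows "(1-t) *\<^sub>R y + t *\<^sub>R w \<in> approx_fixed_points T p N (1 / (real m + 1))"
proof -
  let ?\<delta> = "1 / real (24*N*(m+1)^2)" and ?z = "(1-t) *\<^sub>R y + t *\<^sub>R w"
  have "norm (?z - p) = norm ((1-t) *\<^sub>R (y - p) + t *\<^sub>R (w - p))" by (simp add: algebra_simps)
  also have "\<dots> \<le> (1-t) * norm (y - p) + t * norm (w - p)"
    using t norm_triangle_ineq[of "(1-t) *\<^sub>R (y - p)" "t *\<^sub>R (w - p)"] by simp
  also have "\<dots> \<le> (1-t) * real N + t * real N"
    using y w t unfolding approx_fixed_points_def by (intro add_mono mult_left_mono) auto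
  finally have "norm (?z - p) \<le> real N" by (simp add: algebra_simps)
  moreover have "norm (T ?z - ?z) \<le> 1 / (real m + 1)"
  proof -
    have "(norm (T ?z - ?z))^2 \<le> norm (y - w) * ?\<delta> + ?\<delta>^2"
      using y w t unfolding approx_fixed_points_def by (intro nonexpansive_displacement_convex_comb[OF T]) auto
    also have "\<dots> \<le> 2 * real N * ?\<delta> + real N * ?\<delta>"
    proof (rule add_mono)
      show "norm (y - w) * ?\<delta> \<le> 2 * real N * ?\<delta>"
        using dist_le_of_approx_fixed_points[OF y w] by (intro mult_right_mono) auto
      have "1 \<le> 24*N*(m+1)^2" using N by simp
      then have "(1::real) \<le> real (24*N*(m+1)^2)" by (metis of_nat_1 of_nat_le_iff)
      then have "?\<delta> \<le> 1" by (simp only: divide_le_eq_1) simp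
      moreover have "(1::real) \<le> real N" using N by simp
      ultimately have "?\<delta> \<le> real N" by linarith
      then show "?\<delta>^2 \<le> real N * ?\<delta>" unfolding power2_eq_square by (rule mult_right_mono) simp
    qed
    also have "\<dots> = 1 / (8 * (real m + 1)^2)" using N by (simp add: field_simps)
    also have "\<dots> \<le> 1 / (real m + 1)^2" by (intro divide_left_mono) auto
    also have "\<dots> = (1 / (real m + 1))^2" by (simp add: power_one_over)
    finally show ?thesis by (rule power2_le_imp_le) simp
  qed
  ultimately show ?thesis unfolding approx_fixed_points_def by blast
qed

text \<open>Unless \<open>y\<close> already satisfies the variational inequality of the projection of \<open>x0\<close> up to
  \<open>1/(k+1)\<close>, a small move from \<open>y\<close> towards a violating \<open>w\<close> lowers \<open>\<parallel>x0 - y\<parallel>\<^sup>2\<close> by a fixed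
  amount.\<close>

lemma approx_projection_step:
  fixes T :: "'a::real_inner \<Rightarrow> 'a"
  assumes T: "\<And>x y. norm (T x - T y) \<le> norm (x - y)" and N: "1 \<le> N"
    and y: "y \<in> approx_fixed_points T p N (1 / real (24*N*(m+1)^2))"
  shows "(\<exists>z \<in> approx_fixed_points T p N (1 / (real m + 1)).
      (norm (x0 - z))^2 \<le> (norm (x0 - y))^2 - 1 / (4 * (real N)^2 * (real k + 1)^2))
    \<or> (\<forall>w \<in> approx_fixed_points T p N (1 / real (24*N*(m+1)^2)). inner (x0 - y) (w - y) \<le> 1 / (real k + 1))"
proof (rule disjCI)
  assume "\<not> (\<forall>w \<in> approx_fixed_points T p N (1 / real (24*N*(m+1)^2)).
    inner (x0 - y) (w - y) \<le> 1 / (real k + 1))"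
  then obtain w where w: "w \<in> approx_fixed_points T p N (1 / real (24*N*(m+1)^2))"
    and inn: "1 / (real k + 1) < inner (x0 - y) (w - y)" by (auto simp: not_le)
  define \<epsilon> where "\<epsilon> = 1 / (real k + 1)"
  define t where "t = \<epsilon> / (4 * (real N)^2)"
  define z where "z = (1-t) *\<^sub>R y + t *\<^sub>R w"
  have "1 \<le> (real N)^2" using N by simp
  then have N4: "1 \<le> 4 * (real N)^2" by linarith
  have \<epsilon>: "0 < \<epsilon>" "\<epsilon> \<le> 1" unfolding \<epsilon>_def by auto
  have t: "0 < t" "t \<le> 1" "t * (4 * (real N)^2) = \<epsilon>"
  proof -
    show "0 < t" using N4 \<epsilon> unfolding t_def by (intro divide_pos_pos) linarith+
    show "t * (4 * (real N)^2) = \<epsilon>" using N unfolding t_def by simp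
    have "t \<le> \<epsilon> / 1" unfolding t_def using N N4 \<epsilon> by (intro divide_left_mono) auto
    then show "t \<le> 1" using \<epsilon> by simp
  qed
  have "z \<in> approx_fixed_points T p N (1 / (real m + 1))"
    unfolding z_def using t by (intro approx_fixed_points_convex_comb[OF T N _ _ y w]) auto
  moreover have "(norm (x0 - z))^2 \<le> (norm (x0 - y))^2 - 1 / (4 * (real N)^2 * (real k + 1)^2)"
  proof -
    have xz: "x0 - z = (x0 - y) - t *\<^sub>R (w - y)" unfolding z_def by (simp add: algebra_simps)
    have "(norm (x0 - z))^2 = (norm (x0 - y))^2 - 2*t*inner (x0 - y) (w - y) + t^2 * (norm (w - y))^2"
      unfolding xz power2_norm_eq_inner
      by (simp add: inner_diff_left inner_diff_right inner_commute algebra_simps power2_eq_square)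
    moreover have "t^2 * (norm (w - y))^2 \<le> t * \<epsilon>"
    proof -
      have "t^2 * (norm (w - y))^2 \<le> t^2 * (2 * real N)^2"
        using dist_le_of_approx_fixed_points[OF w y] by (intro mult_left_mono power_mono) auto
      also have "\<dots> = t * \<epsilon>" using t(3) by (simp add: power2_eq_square algebra_simps)
      finally show ?thesis .
    qed
    moreover have "2*t*\<epsilon> \<le> 2*t*inner (x0 - y) (w - y)"
      using inn t unfolding \<epsilon>_def by (intro mult_left_mono) auto
    moreover have "t * \<epsilon> = 1 / (4 * (real N)^2 * (real k + 1)^2)"
      unfolding t_def \<epsilon>_def by (simp add: power2_eq_square)
    ultimately show ?thesis by linarith
  qed
  ultimately show "\<exists>z \<in> approx_fixed_points T p N (1 / (real m + 1)).
      (norm (x0 - z))^2 \<le> (norm (x0 - y))^2 - 1 / (4 * (real N)^2 * (real k + 1)^2)" by blast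
qed

lemma approx_fixed_points_w_fun:
  assumes N: "1 \<le> N"
  shows "approx_fixed_points T p N (1 / (real (w_fun g N m) + 1))
      \<subseteq> approx_fixed_points T p N (1 / real (24*N*(m+1)^2))"
    and "approx_fixed_points T p N (1 / (real (w_fun g N m) + 1))
      \<subseteq> approx_fixed_points T p N (1 / (real (g (24*N*(m+1)^2)) + 1))"
proof -
  have pos: "0 < real (24*N*(m+1)^2)" using N by (simp only: of_nat_0_less_iff) simp
  have "24*N*(m+1)^2 \<le> w_fun g N m" "g (24*N*(m+1)^2) \<le> w_fun g N m" by (rule w_fun_ge)+
  then have le: "real (24*N*(m+1)^2) \<le> real (w_fun g N m)" "real (g (24*N*(m+1)^2)) \<le> real (w_fun g N m)"
    by (simp_all only: of_nat_le_iff)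
  show "approx_fixed_points T p N (1 / (real (w_fun g N m) + 1))
      \<subseteq> approx_fixed_points T p N (1 / real (24*N*(m+1)^2))"
    by (rule approx_fixed_points_mono, rule frac_le) (use pos le in linarith)+
  show "approx_fixed_points T p N (1 / (real (w_fun g N m) + 1))
      \<subseteq> approx_fixed_points T p N (1 / (real (g (24*N*(m+1)^2)) + 1))"
    by (rule approx_fixed_points_mono, rule frac_le) (use le in linarith)+
qed

text \<open>Iterating the step from \<open>p\<close>: after \<open>j\<close> failures \<open>\<parallel>x0 - y\<parallel>\<^sup>2 \<le> N\<^sup>2 - j/(4N\<^sup>2(k+1)\<^sup>2)\<close>. The
  accuracy demanded of \<open>y\<close> is chosen backwards along the iterates of \<open>w_fun g N\<close>, so that each
  step still has an accurate enough point to work with.\<close>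

lemma approx_projection_descent:
  fixes T :: "'a::real_inner \<Rightarrow> 'a" and g :: "nat \<Rightarrow> nat"
  assumes T: "\<And>x y. norm (T x - T y) \<le> norm (x - y)" and Tp: "T p = p"
    and x0: "norm (x0 - p) \<le> real N" and N: "1 \<le> N" and j: "j \<le> Suc R"
  shows "(\<exists>m \<le> (w_fun g N ^^ R) 0.
      \<exists>y \<in> approx_fixed_points T p N (1 / (real (g (24*N*(m+1)^2)) + 1)).
        \<forall>w \<in> approx_fixed_points T p N (1 / real (24*N*(m+1)^2)). inner (x0 - y) (w - y) \<le> 1 / (real k + 1))
    \<or> (\<exists>y \<in> approx_fixed_points T p N (1 / (real ((w_fun g N ^^ (Suc R - j)) 0) + 1)).
        (norm (x0 - y))^2 \<le> (real N)^2 - real j / (4 * (real N)^2 * (real k + 1)^2))"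
    (is "?good \<or> ?descent j")
  using j
proof (induction j)
  case 0
  have "(norm (x0 - p))^2 \<le> (real N)^2" using x0 by (intro power_mono) auto
  moreover have "T p - p = 0" using Tp by simp
  ultimately show ?case unfolding approx_fixed_points_def by auto
next
  case (Suc j)
  let ?AF = "approx_fixed_points T p N" and ?L = "\<lambda>r. (w_fun g N ^^ r) 0"
  define m where "m = ?L (R - j)"
  have m_le: "m \<le> ?L R"
    unfolding m_def by (rule funpow_inflationary_mono) (use w_fun_ge(3)[OF N] in auto)
  have L: "?L (Suc R - j) = w_fun g N m" "?L (Suc R - Suc j) = m"
    unfolding m_def using Suc.prems by (simp_all add: Suc_diff_le)
  from Suc consider ?good
    | y where "y \<in> ?AF (1 / (real (w_fun g N m) + 1))"
        "(norm (x0 - y))^2 \<le> (real N)^2 - real j / (4 * (real N)^2 * (real k + 1)^2)"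
    unfolding L by auto
  then show ?case
  proof cases
    case (2 y)
    then have "y \<in> ?AF (1 / real (24*N*(m+1)^2))" using approx_fixed_points_w_fun(1)[OF N] by blast
    from approx_projection_step[OF T N this, of x0 k] show ?thesis
    proof
      assume "\<exists>z \<in> ?AF (1 / (real m + 1)).
        (norm (x0 - z))^2 \<le> (norm (x0 - y))^2 - 1 / (4 * (real N)^2 * (real k + 1)^2)"
      then obtain z where z: "z \<in> ?AF (1 / (real m + 1))"
        "(norm (x0 - z))^2 \<le> (norm (x0 - y))^2 - 1 / (4 * (real N)^2 * (real k + 1)^2)" ..
      have "(norm (x0 - z))^2 \<le> (real N)^2 - real (Suc j) / (4 * (real N)^2 * (real k + 1)^2)"
        using z(2) 2(2) unfolding of_nat_Suc add_divide_distrib by linarith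
      then show ?thesis using z(1) unfolding L by blast
    next
      assume "\<forall>w \<in> ?AF (1 / real (24*N*(m+1)^2)). inner (x0 - y) (w - y) \<le> 1 / (real k + 1)"
      then show ?thesis using 2(1) approx_fixed_points_w_fun(2)[OF N] m_le by blast
    qed
  qed simp
qed

text \<open>After \<open>R = 4N\<^sup>4(k+1)\<^sup>2\<close> failures the bound on \<open>\<parallel>x0 - y\<parallel>\<^sup>2\<close> would become negative.\<close>

lemma approx_projection_metastable:
  fixes T :: "'a::real_inner \<Rightarrow> 'a" and g :: "nat \<Rightarrow> nat"
  assumes T: "\<And>x y. norm (T x - T y) \<le> norm (x - y)" and Tp: "T p = p"
    and x0: "norm (x0 - p) \<le> real N" and N: "1 \<le> N"
  shows "\<exists>m \<le> (w_fun g N ^^ (4*N^4*(k+1)^2)) 0.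
    \<exists>y \<in> approx_fixed_points T p N (1 / (real (g (24*N*(m+1)^2)) + 1)).
      \<forall>w \<in> approx_fixed_points T p N (1 / real (24*N*(m+1)^2)). inner (x0 - y) (w - y) \<le> 1 / (real k + 1)"
proof -
  define R where "R = 4*N^4*(k+1)^2"
  define X where "X = 4 * (real N)^2 * (real k + 1)^2"
  have "0 < X" using N unfolding X_def by simp
  moreover have "real R = (real N)^2 * X"
    unfolding R_def X_def by (simp add: algebra_simps power2_eq_square power4_eq_xxxx)
  ultimately have "(real N)^2 - real (Suc R) / X < 0" by (simp add: field_simps)
  then have "\<not> (norm (x0 - y))^2 \<le> (real N)^2 - real (Suc R) / X" for y
    using zero_le_power2[of "norm (x0 - y)"] by linarith
  then show ?thesis
    using approx_projection_descent[OF T Tp x0 N order_refl, where g=g and R=R and k=k] unfolding R_def X_def by blast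
qed

section \<open>Rates for the Halpern-type proximal point algorithm\<close>

lemma chi1_mono:
  assumes "mono a" "mono B" "mono E" "k \<le> k'"
  shows "chi1 a B E DD EE k \<le> chi1 a B E DD EE k'"
proof -
  have a: "a (2 * (2 * DD + EE) * (4*k+3 + 1) - 1) \<le> a (2 * (2 * DD + EE) * (4*k'+3 + 1) - 1)"
    using assms(4) by (intro monoD[OF assms(1)] diff_le_mono mult_le_mono2) auto
  have E: "E (2 * (4*k+3) + 1) + 1 \<le> E (2 * (4*k'+3) + 1) + 1"
    using assms(4) by (simp add: monoD[OF assms(3)])
  have B: "B (8 * (DD + EE) * (k + 1) - 1) \<le> B (8 * (DD + EE) * (k' + 1) - 1)"
    using assms(4) by (intro monoD[OF assms(2)] diff_le_mono mult_le_mono2) auto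
  show ?thesis unfolding chi1_def xi_fun_def by (intro add_le_mono1 max.mono a E B)
qed

lemma Psi_ge_chi1:
  assumes "mono a" "mono B" "mono E"
    and "m \<le> (w_fun (nu_hat a b B E DD EE f) (N_bound DD EE) ^^ (4 * N_bound DD EE ^ 4 * (k+1)^2)) 0"
  shows "chi1 a B E DD EE (24 * N_bound DD EE * (m+1)^2) \<le> Psi a b B E DD EE k f"
  unfolding Psi_def Let_def
  using assms by (intro chi1_mono mult_le_mono2 power_mono) auto

locale hppa =
  fixes A :: "'a::{real_inner,complete_space} \<Rightarrow> 'a set"
    and \<alpha> \<beta> :: "nat \<Rightarrow> real"
    and e x :: "nat \<Rightarrow> 'a"
    and x0 p :: 'a
    and a b B E :: "nat \<Rightarrow> nat"
    and DD EE :: nat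
  assumes maxmon: "maximal_monotone A"
    and alpha_range: "\<And>n. 0 < \<alpha> n \<and> \<alpha> n < 1"
    and beta_pos: "\<And>n. 0 < \<beta> n"
    and x_init: "x 0 = x0"
    and HPPA: "\<And>n. x (Suc n) = \<alpha> n *\<^sub>R x0 + (1 - \<alpha> n) *\<^sub>R (resolvent A (\<beta> n) (x n) + e n)"
    and mono_a: "mono a" and mono_b: "mono b" and mono_B: "mono B" and mono_E: "mono E"
    and Q1: "\<And>k n. n \<ge> a k \<Longrightarrow> \<alpha> n \<le> 1 / (real k + 1)"
    and Q3': "\<And>n. \<beta> n \<le> real (b n)"
    and Q3: "\<And>k n. n \<ge> B k \<Longrightarrow> \<beta> n \<ge> real k"
    and Q4: "\<And>k n. (\<Sum>i = E k + 1..E k + n. norm (e i)) \<le> 1 / (real k + 1)"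
    and p_zero: "p \<in> zeros A"
    and EE_bound: "real EE \<ge> 1 + (\<Sum>i = 0..E 0. norm (e i))"
    and DD_bound: "real DD \<ge> norm (x0 - p)"
begin

lemma EE_ge_1: "1 \<le> EE"
  using EE_bound sum_nonneg[of "{0..E 0}" "\<lambda>i. norm (e i)"] by simp

lemma sum_norm_e_le: "(\<Sum>i<n. norm (e i)) \<le> real EE"
proof -
  have "(\<Sum>i<n. norm (e i)) \<le> (\<Sum>i \<in> {0..E 0} \<union> {E 0 + 1..E 0 + n}. norm (e i))"
    by (rule sum_mono2) auto
  also have "\<dots> = (\<Sum>i = 0..E 0. norm (e i)) + (\<Sum>i = E 0 + 1..E 0 + n. norm (e i))"
    by (rule sum.union_disjoint) auto
  also have "\<dots> \<le> real EE" using EE_bound Q4[of 0 n] by simp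
  finally show ?thesis .
qed

lemma dist_x_p_le_sum: "norm (x n - p) \<le> real DD + (\<Sum>i<n. norm (e i))"
proof (induction n)
  case 0
  then show ?case using x_init DD_bound by simp
next
  case (Suc n)
  let ?J = "resolvent A (\<beta> n)"
  have \<alpha>: "0 < \<alpha> n" "\<alpha> n < 1" using alpha_range by auto
  have "x (Suc n) - p = \<alpha> n *\<^sub>R (x0 - p) + (1 - \<alpha> n) *\<^sub>R ((?J (x n) - ?J p) + e n)"
    unfolding HPPA resolvent_zero[OF maxmon beta_pos p_zero] by (simp add: algebra_simps)
  then have "norm (x (Suc n) - p) \<le> \<alpha> n * norm (x0 - p) + (1 - \<alpha> n) * norm ((?J (x n) - ?J p) + e n)"
    using norm_triangle_ineq[of "\<alpha> n *\<^sub>R (x0 - p)" "(1 - \<alpha> n) *\<^sub>R ((?J (x n) - ?J p) + e n)"] \<alpha>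
    by simp
  also have "\<dots> \<le> \<alpha> n * real DD + (1 - \<alpha> n) * (real DD + (\<Sum>i<Suc n. norm (e i)))"
  proof (intro add_mono mult_left_mono)
    have "norm ((?J (x n) - ?J p) + e n) \<le> norm (x n - p) + norm (e n)"
      using norm_triangle_ineq[of "?J (x n) - ?J p" "e n"] resolvent_nonexpansive[OF maxmon beta_pos[of n], of "x n" p]
      by linarith
    then show "norm ((?J (x n) - ?J p) + e n) \<le> real DD + (\<Sum>i<Suc n. norm (e i))"
      using Suc.IH by simp
  qed (use \<alpha> DD_bound in auto)
  also have "\<dots> \<le> real DD + (\<Sum>i<Suc n. norm (e i))"
  proof -
    have "(1 - \<alpha> n) * (\<Sum>i<Suc n. norm (e i)) \<le> (\<Sum>i<Suc n. norm (e i))"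
      using \<alpha> sum_nonneg[of "{..<Suc n}" "\<lambda>i. norm (e i)"] by (simp add: mult_left_le_one_le)
    then show ?thesis by (simp add: algebra_simps)
  qed
  finally show ?case .
qed

lemma dist_x_p_le: "norm (x n - p) \<le> real DD + real EE"
  using dist_x_p_le_sum[of n] sum_norm_e_le[of n] by linarith

lemma alpha_le: "1 \<le> K \<Longrightarrow> a (K - 1) \<le> n \<Longrightarrow> \<alpha> n \<le> 1 / real K"
  using Q1[of "K - 1" n] by (simp add: of_nat_diff)

lemma beta_ge: "B (K - 1) \<le> n \<Longrightarrow> real K - 1 \<le> \<beta> n"
  using Q3[of "K - 1" n] by linarith

lemma norm_e_le: "E k < n \<Longrightarrow> norm (e n) \<le> 1 / (real k + 1)"
  using member_le_sum[of n "{E k + 1..E k + (n - E k)}" "\<lambda>i. norm (e i)"] Q4[of k "n - E k"] by simp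

lemma dist_x_Suc_resolvent:
  "norm (x (Suc j) - resolvent A (\<beta> j) (x j)) \<le> \<alpha> j * (2 * real DD + real EE) + norm (e j)"
proof -
  let ?u = "resolvent A (\<beta> j) (x j)"
  have \<alpha>: "0 < \<alpha> j" "\<alpha> j < 1" using alpha_range by auto
  have "norm (?u - p) \<le> real DD + real EE"
    using resolvent_nonexpansive[OF maxmon beta_pos[of j], of "x j" p] dist_x_p_le[of j]
    unfolding resolvent_zero[OF maxmon beta_pos p_zero] by linarith
  then have x0u: "norm (x0 - ?u) \<le> 2 * real DD + real EE"
    using norm_triangle_ineq[of "x0 - p" "p - ?u"] DD_bound by (simp add: norm_minus_commute)
  have "x (Suc j) - ?u = \<alpha> j *\<^sub>R (x0 - ?u) + (1 - \<alpha> j) *\<^sub>R e j"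
    unfolding HPPA by (simp add: algebra_simps)
  then have "norm (x (Suc j) - ?u) \<le> \<alpha> j * norm (x0 - ?u) + (1 - \<alpha> j) * norm (e j)"
    using norm_triangle_ineq[of "\<alpha> j *\<^sub>R (x0 - ?u)" "(1 - \<alpha> j) *\<^sub>R e j"] \<alpha> by simp
  also have "\<dots> \<le> \<alpha> j * (2 * real DD + real EE) + 1 * norm (e j)"
    using \<alpha> x0u by (intro add_mono mult_left_mono mult_right_mono) auto
  finally show ?thesis by simp
qed

lemma displacement_resolvent_x_le:
  "norm (resolvent A 1 (resolvent A (\<beta> j) (x j)) - resolvent A (\<beta> j) (x j))
    \<le> 2 * (real DD + real EE) / \<beta> j"
proof -
  let ?u = "resolvent A (\<beta> j) (x j)"
  have "norm (resolvent A 1 ?u - ?u) \<le> 1 * norm ((1 / \<beta> j) *\<^sub>R (x j - ?u))"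
    by (intro resolvent_displacement_le_mem[OF maxmon] resolvent_mem[OF maxmon beta_pos]) simp
  also have "\<dots> = norm (x j - ?u) / \<beta> j" using beta_pos[of j] by simp
  also have "norm (x j - ?u) \<le> 2 * (real DD + real EE)"
    using norm_triangle_ineq[of "x j - p" "p - ?u"] dist_x_p_le[of j]
      resolvent_nonexpansive[OF maxmon beta_pos[of j], of "x j" p]
    unfolding resolvent_zero[OF maxmon beta_pos p_zero] by (simp add: norm_minus_commute)
  then have "norm (x j - ?u) / \<beta> j \<le> 2 * (real DD + real EE) / \<beta> j"
    using beta_pos[of j] by (simp add: divide_right_mono)
  finally show ?thesis .
qed


text \<open>With \<open>i = j + 1 \<ge> \<chi>\<^sub>1(k)\<close>: \<open>\<alpha>\<^sub>j\<close> and \<open>e\<^sub>j\<close> are so small that \<open>x\<^sub>i\<close> is \<open>1/(4(k+1))\<close>-close to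
  \<open>u = J\<^sub>\<beta>\<^sub>j x\<^sub>j\<close>, and \<open>\<beta>\<^sub>j\<close> is so large that \<open>u\<close> is a \<open>1/(2(k+1))\<close>-fixed point of \<open>J\<^sub>1\<close>.\<close>

lemma displacement_x_le:
  assumes "chi1 a B E DD EE k \<le> i"
  shows "norm (resolvent A 1 (x i) - x i) \<le> 1 / (real k + 1)"
proof -
  obtain j where i: "i = Suc j" and j: "xi_fun a E DD EE (4*k+3) \<le> j" "B (8*(DD+EE)*(k+1) - 1) \<le> j"
    using assms unfolding chi1_def by (cases i) auto
  define K where "K = real k + 1"
  define M where "M = real DD + real EE"
  define u where "u = resolvent A (\<beta> j) (x j)"
  have K: "1 \<le> K" unfolding K_def by simp
  have M: "1 \<le> M" unfolding M_def using EE_ge_1 by simp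
  have MK: "1 \<le> M * K" using mult_mono[OF M K] M by simp
  have "\<alpha> j * (2 * real DD + real EE) \<le> 1 / (8 * K)"
  proof -
    define P where "P = 2 * real DD + real EE"
    have P: "0 < P" unfolding P_def using EE_ge_1 by simp
    have "\<alpha> j \<le> 1 / real (2 * (2 * DD + EE) * (4*k+3 + 1))"
      using j(1) EE_ge_1 unfolding xi_fun_def by (intro alpha_le) auto
    also have "real (2 * (2 * DD + EE) * (4*k+3 + 1)) = 8 * K * P"
      unfolding K_def P_def by (simp add: algebra_simps)
    finally have "\<alpha> j * P \<le> 1 / (8 * K * P) * P" using P by (intro mult_right_mono) auto
    then show ?thesis using P unfolding P_def by simp
  qed
  moreover have "norm (e j) \<le> 1 / (8 * K)"
    using norm_e_le[of "2*(4*k+3) + 1" j] j(1) unfolding xi_fun_def K_def by (simp add: add.commute)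
  ultimately have xu: "norm (x i - u) \<le> 1 / (4 * K)"
    using dist_x_Suc_resolvent[of j] unfolding i u_def by simp
  have "8 * M * K - 1 \<le> \<beta> j"
    using beta_ge[of "8*(DD+EE)*(k+1)" j] j(2) unfolding M_def K_def by (simp add: algebra_simps)
  then have "4 * M * K \<le> \<beta> j" using MK by linarith
  have "norm (resolvent A 1 u - u) \<le> 2 * M / \<beta> j"
    using displacement_resolvent_x_le[of j] unfolding u_def M_def .
  also have "\<dots> \<le> 2 * M / (4 * M * K)"
    using \<open>4 * M * K \<le> \<beta> j\<close> M K beta_pos[of j] by (intro divide_left_mono mult_pos_pos) auto
  also have "\<dots> = 1 / (2 * K)" using M by simp
  finally have "norm (resolvent A 1 (x i) - x i) \<le> 2 * (1 / (4 * K)) + 1 / (2 * K)"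
    using nonexpansive_displacement_le[OF resolvent_nonexpansive[OF maxmon], of 1 "x i" u] xu by simp
  also have "2 * (1 / (4 * K)) + 1 / (2 * K) = 1 / K" using K by (simp add: field_simps)
  finally show ?thesis unfolding K_def .
qed

lemma displacement_resolvent_le_delta_b:
  assumes y: "norm (resolvent A 1 y - y) \<le> 1 / (real (delta_b b K K) + 1)" and i: "i \<le> K"
  shows "norm (resolvent A (\<beta> i) y - y) \<le> 1 / (real K + 1)"
proof -
  define C where "C = max 2 (b K)"
  have C: "2 \<le> C" unfolding C_def by simp
  have delta: "real (delta_b b K K) + 1 = real C * (real K + 1)"
    using C unfolding delta_b_def C_def by (simp add: of_nat_diff algebra_simps)
  have "\<beta> i \<le> real C"
    using Q3'[of i] monoD[OF mono_b i] unfolding C_def by linarith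
  then have "max 2 (\<beta> i) \<le> real C" using C by simp
  have "norm (resolvent A (\<beta> i) y - y) \<le> max 2 (\<beta> i) * norm (resolvent A 1 y - y)"
    by (rule resolvent_displacement_le_max[OF maxmon beta_pos])
  also have "\<dots> \<le> real C * (1 / (real C * (real K + 1)))"
    using y \<open>max 2 (\<beta> i) \<le> real C\<close> unfolding delta by (intro mult_mono) auto
  also have "\<dots> = 1 / (real K + 1)" using C by simp
  finally show ?thesis .
qed

lemma metastability:
  "\<exists>n \<le> Psi a b B E DD EE k f. \<exists>y. norm (y - p) \<le> real (N_bound DD EE) \<and>
    (\<forall>i \<in> {n..f n}. norm (resolvent A (\<beta> i) y - y) \<le> 1 / (real (f n) + 1)
      \<and> inner (x0 - y) (x i - y) \<le> 1 / (real k + 1))"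
proof -
  define N where "N = N_bound DD EE"
  let ?T = "resolvent A 1" and ?AF = "approx_fixed_points (resolvent A 1) p N"
  have N: "1 \<le> N" "real DD + real EE \<le> real N" "norm (x0 - p) \<le> real N"
    using EE_ge_1 DD_bound unfolding N_def N_bound_def by auto
  have T: "norm (?T u - ?T v) \<le> norm (u - v)" for u v by (rule resolvent_nonexpansive[OF maxmon]) simp
  have Tp: "?T p = p" by (rule resolvent_zero[OF maxmon _ p_zero]) simp
  from approx_projection_metastable[OF T Tp N(3) N(1), of k "nu_hat a b B E DD EE f"]
  obtain m y where m: "m \<le> (w_fun (nu_hat a b B E DD EE f) N ^^ (4*N^4*(k+1)^2)) 0"
    and y: "y \<in> ?AF (1 / (real (nu_hat a b B E DD EE f (24*N*(m+1)^2)) + 1))"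
    and proj: "\<And>w. w \<in> ?AF (1 / real (24*N*(m+1)^2)) \<Longrightarrow> inner (x0 - y) (w - y) \<le> 1 / (real k + 1)"
    by blast
  define n where "n = chi1 a B E DD EE (24*N*(m+1)^2)"
  show ?thesis
  proof (intro exI conjI ballI)
    show "n \<le> Psi a b B E DD EE k f"
      using Psi_ge_chi1[OF mono_a mono_B mono_E m[unfolded N_def]] unfolding n_def N_def .
    show "norm (y - p) \<le> real (N_bound DD EE)" using y unfolding approx_fixed_points_def N_def by simp
  next
    fix i assume i: "i \<in> {n..f n}"
    show "norm (resolvent A (\<beta> i) y - y) \<le> 1 / (real (f n) + 1)"
    proof (rule displacement_resolvent_le_delta_b)
      show "norm (?T y - y) \<le> 1 / (real (delta_b b (f n) (f n)) + 1)"
        using y unfolding approx_fixed_points_def nu_hat_def nu_f_def n_def by simp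
    qed (use i in simp)
    have "norm (?T (x i) - x i) \<le> 1 / (real (24*N*(m+1)^2) + 1)"
      using displacement_x_le[of "24*N*(m+1)^2" i] i unfolding n_def by simp
    also have "\<dots> \<le> 1 / real (24*N*(m+1)^2)"
    proof (rule frac_le)
      show "0 < real (24*N*(m+1)^2)" using N(1) by (simp only: of_nat_0_less_iff) simp
    qed simp_all
    finally have "x i \<in> ?AF (1 / real (24*N*(m+1)^2))"
      using dist_x_p_le[of i] N(2) unfolding approx_fixed_points_def by simp
    then show "inner (x0 - y) (x i - y) \<le> 1 / (real k + 1)" by (rule proj)
  qed
qed

end

theorem mainTheorem12:
  fixes A :: "'a::{real_inner, complete_space} \<Rightarrow> 'a set"
    and \<alpha> \<beta> :: "nat \<Rightarrow> real"
    and e x :: "nat \<Rightarrow> 'a"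
    and x0 p :: 'a
    and a b B E :: "nat \<Rightarrow> nat"
    and DD EE :: nat
  assumes maxmon: "maximal_monotone A"
    and alpha_range: "\<And>n. 0 < \<alpha> n \<and> \<alpha> n < 1"
    and beta_pos: "\<And>n. 0 < \<beta> n"
    and x_init: "x 0 = x0"
    and HPPA: "\<And>n. x (Suc n) = \<alpha> n *\<^sub>R x0 + (1 - \<alpha> n) *\<^sub>R (resolvent A (\<beta> n) (x n) + e n)"
    and mono_a: "mono a" and mono_b: "mono b" and mono_B: "mono B" and mono_E: "mono E"
    and Q1: "\<And>k n. n \<ge> a k \<Longrightarrow> \<alpha> n \<le> 1 / (real k + 1)"
    and Q3': "\<And>n. \<beta> n \<le> real (b n)"
    and Q3: "\<And>k n. n \<ge> B k \<Longrightarrow> \<beta> n \<ge> real k"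
    and Q4: "\<And>k n. (\<Sum>i = E k + 1..E k + n. norm (e i)) \<le> 1 / (real k + 1)"
    and p_zero: "p \<in> zeros A"
    and EE_bound: "real EE \<ge> 1 + (\<Sum>i = 0..E 0. norm (e i))"
    and DD_bound: "real DD \<ge> norm (x0 - p)"
  shows "\<forall>k. \<forall>f::nat \<Rightarrow> nat. mono f \<longrightarrow>
           (\<exists>n \<le> Psi a b B E DD EE k f. \<exists>y. norm (y - p) \<le> real (N_bound DD EE) \<and>
              (\<forall>i \<in> {n..f n}. norm (resolvent A (\<beta> i) y - y) \<le> 1 / (real (f n) + 1)
                 \<and> inner (x0 - y) (x i - y) \<le> 1 / (real k + 1)))"
proof -
  interpret hppa A \<alpha> \<beta> e x x0 p a b B E DD EE
    by unfold_locales (fact assms)+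
  \<comment> \<open>\<open>metastability\<close> holds for every \<open>f\<close>.\<close>
  show ?thesis using metastability by blast
qed

end
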